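(* Let $Z\subseteq\{0,1\}^n$ and $$X=\{(\bm x,\bm z)\in\mathbb R^n\times Z:\ \|\bm x\|_2^2\le 1,\ x_i(1-z_i)=0\ \text{for } i=1,\dots,n\}.$$ Then $$\operatorname{conv}(X)=\bigcap_{\bm\alpha\in\mathbb R^n}P(\bm\alpha).$$
   Context: For $\bm\alpha\in\mathbb R^n$, $P_0(\bm\alpha)=\{(\bm x,\bm z)\in\mathbb R^n\times Z:\ \sum_{i=1}^n|\alpha_ix_i|\le\sqrt{\sum_{i=1}^n\alpha_i^2z_i}\}$ and $P(\bm\alpha)=\operatorname{conv}(P_0(\bm\alpha))$, the convex hull. *)

theory Defs
  imports "HOL-Analysis.Analysis"
begin

definition P0 :: "(real^'n::finite) set \<Rightarrow> real^'n \<Rightarrow> ((real^'n) \<times> (real^'n)) set" where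
  "P0 Z \<alpha> = {(x, z). z \<in> Z \<and>
      (\<Sum>i\<in>UNIV. \<bar>\<alpha>$i * x$i\<bar>) \<le> sqrt (\<Sum>i\<in>UNIV. (\<alpha>$i)\<^sup>2 * z$i)}"

definition P :: "(real^'n::finite) set \<Rightarrow> real^'n \<Rightarrow> ((real^'n) \<times> (real^'n)) set" where
  "P Z \<alpha> = convex hull (P0 Z \<alpha>)"

end

theory Submission
  imports Defs
begin

(* For a binary support pattern z and a direction a, Cauchy-Schwarz shows that the minimum
   of a . x over unit vectors x supported on z is exactly -sqrt (sum_i a_i^2 z_i), attained at
   x = -(a o z) / sqrt (sum_i a_i^2 z_i).  Hence X is contained in every P0(alpha); conversely,
   if a linear functional (a, b) is bounded below by c on X, then it is bounded below by c on
   P0(a), because replacing x by that minimiser (keeping z) can only decrease the functional.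
   Since X is compact, its convex hull is the intersection of the open halfspaces containing X. *)

definition supported_unit_ball :: "(real^'n) set \<Rightarrow> ((real^'n) \<times> (real^'n)) set" where
  "supported_unit_ball Z = {(x, z). z \<in> Z \<and> (\<Sum>i\<in>UNIV. (x$i)\<^sup>2) \<le> 1 \<and>
                (\<forall>i. x$i * (1 - z$i) = 0)}"

lemma norm_cart_eq_sqrt_sum_squares: "norm (x::real^'n) = sqrt (\<Sum>i\<in>UNIV. (x$i)\<^sup>2)"
  by (simp add: norm_vec_def L2_set_def)

lemma finite_binary_vectors: "finite {z::real^'n. \<forall>i. z$i = 0 \<or> z$i = 1}"
proof (rule finite_subset)
  show "{z::real^'n. \<forall>i. z$i = 0 \<or> z$i = 1} \<subseteq> (\<lambda>S. \<chi> i. if i \<in> S then 1 else 0) ` Pow UNIV"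
  proof
    fix z :: "real^'n" assume "z \<in> {z. \<forall>i. z$i = 0 \<or> z$i = 1}"
    then have "z = (\<chi> i. if i \<in> {i. z$i = 1} then 1 else 0)"
      by (auto simp: vec_eq_iff)
    then show "z \<in> (\<lambda>S. \<chi> i. if i \<in> S then 1 else 0) ` Pow UNIV" by blast
  qed
qed simp

lemma sum_power2_mult_binary_nonneg:
  fixes a z :: "real^'n"
  assumes "\<forall>i. z$i = 0 \<or> z$i = 1"
  shows "0 \<le> (\<Sum>i\<in>UNIV. (a$i)\<^sup>2 * z$i)"
  using assms by (intro sum_nonneg) (metis mult_1_right mult_zero_right order_refl zero_le_power2)

lemma sum_abs_mult_le_on_support:
  fixes a x z :: "real^'n"
  assumes z01: "\<forall>i. z$i = 0 \<or> z$i = 1" and supp: "\<forall>i. x$i * (1 - z$i) = 0"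
  shows "(\<Sum>i\<in>UNIV. \<bar>a$i * x$i\<bar>) \<le> sqrt (\<Sum>i\<in>UNIV. (a$i)\<^sup>2 * z$i) * norm x"
proof -
  define u :: "real^'n" where "u = (\<chi> i. \<bar>a$i\<bar> * z$i)"
  define v :: "real^'n" where "v = (\<chi> i. \<bar>x$i\<bar>)"
  have "(\<Sum>i\<in>UNIV. \<bar>a$i * x$i\<bar>) = inner u v"
    unfolding inner_vec_def u_def v_def
  proof (rule sum.cong)
    fix i
    show "\<bar>a$i * x$i\<bar> = inner ((\<chi> i. \<bar>a$i\<bar> * z$i) $ i) ((\<chi> i. \<bar>x$i\<bar>) $ i)"
      using z01 supp by (cases "z$i = 0") (auto simp: abs_mult)
  qed simp
  also have "\<dots> \<le> norm u * norm v" by (rule norm_cauchy_schwarz)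
  also have "norm u = sqrt (\<Sum>i\<in>UNIV. (a$i)\<^sup>2 * z$i)"
    unfolding norm_cart_eq_sqrt_sum_squares u_def
    using z01 by (intro arg_cong[where f=sqrt] sum.cong) (auto simp: power2_eq_square)
  also have "norm v = norm x"
    unfolding norm_cart_eq_sqrt_sum_squares v_def by simp
  finally show ?thesis .
qed

lemma supported_unit_vector_minimizing_inner:
  fixes a z :: "real^'n"
  assumes z01: "\<forall>i. z$i = 0 \<or> z$i = 1"
  obtains y where "\<forall>i. y$i * (1 - z$i) = 0" and "(\<Sum>i\<in>UNIV. (y$i)\<^sup>2) \<le> 1"
    and "inner a y = - sqrt (\<Sum>i\<in>UNIV. (a$i)\<^sup>2 * z$i)"
proof
  define S where "S = (\<Sum>i\<in>UNIV. (a$i)\<^sup>2 * z$i)"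
  have S_nonneg: "0 \<le> S"
    unfolding S_def using z01 by (rule sum_power2_mult_binary_nonneg)
  \<comment> \<open>if S = 0, division by zero makes y = 0, which is still a valid witness\<close>
  define y :: "real^'n" where "y = (\<chi> i. - a$i * z$i / sqrt S)"
  show "\<forall>i. y$i * (1 - z$i) = 0" unfolding y_def using z01 by auto
  have "(\<Sum>i\<in>UNIV. (y$i)\<^sup>2) = S / S"
    unfolding y_def S_def sum_divide_distrib
    using z01 S_nonneg by (intro sum.cong) (auto simp: power2_eq_square S_def)
  then show "(\<Sum>i\<in>UNIV. (y$i)\<^sup>2) \<le> 1" by simp
  have "inner a y = - S / sqrt S"
    unfolding inner_vec_def y_def S_def
    by (simp add: sum_divide_distrib sum_negf power2_eq_square algebra_simps)
  also have "\<dots> = - sqrt S"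
    using S_nonneg by (cases "S = 0") (simp_all add: real_div_sqrt)
  finally show "inner a y = - sqrt (\<Sum>i\<in>UNIV. (a$i)\<^sup>2 * z$i)" unfolding S_def .
qed

lemma compact_supported_unit_ball:
  fixes Z :: "(real^'n) set"
  assumes Z: "Z \<subseteq> {z. \<forall>i. z$i = 0 \<or> z$i = 1}"
  shows "compact (supported_unit_ball Z)"
proof -
  have fin: "finite Z" using finite_subset[OF Z finite_binary_vectors] .
  have "supported_unit_ball Z =
      {p. (\<Sum>i\<in>UNIV. (fst p$i)\<^sup>2) \<le> 1 \<and> (\<forall>i. fst p$i * (1 - snd p$i) = 0)} \<inter> (UNIV \<times> Z)"
    by (auto simp: supported_unit_ball_def)
  moreover have "closed {p::(real^'n) \<times> (real^'n).
      (\<Sum>i\<in>UNIV. (fst p$i)\<^sup>2) \<le> 1 \<and> (\<forall>i. fst p$i * (1 - snd p$i) = 0)}"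
    by (intro closed_Collect_conj closed_Collect_all closed_Collect_le closed_Collect_eq
        continuous_intros)
  moreover have "closed (UNIV \<times> Z)"
    using fin by (intro closed_Times) (auto simp: finite_imp_closed)
  ultimately have "closed (supported_unit_ball Z)" by auto
  moreover have "supported_unit_ball Z \<subseteq> cball 0 1 \<times> Z"
    by (auto simp: supported_unit_ball_def norm_cart_eq_sqrt_sum_squares)
  moreover have "bounded (cball (0::real^'n) 1 \<times> Z)"
    using fin by (intro bounded_Times) (auto simp: finite_imp_bounded)
  ultimately show ?thesis
    using bounded_subset compact_eq_bounded_closed by blast
qed

lemma supported_unit_ball_subset_P0:
  fixes Z :: "(real^'n) set"
  assumes Z: "Z \<subseteq> {z. \<forall>i. z$i = 0 \<or> z$i = 1}"
  shows "supported_unit_ball Z \<subseteq> P0 Z \<alpha>"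
proof clarify
  fix x z assume "(x, z) \<in> supported_unit_ball Z"
  then have zZ: "z \<in> Z" and x_le: "(\<Sum>i\<in>UNIV. (x$i)\<^sup>2) \<le> 1"
    and supp: "\<forall>i. x$i * (1 - z$i) = 0"
    by (auto simp: supported_unit_ball_def)
  have "(\<Sum>i\<in>UNIV. \<bar>\<alpha>$i * x$i\<bar>) \<le> sqrt (\<Sum>i\<in>UNIV. (\<alpha>$i)\<^sup>2 * z$i) * norm x"
    using Z zZ supp by (intro sum_abs_mult_le_on_support) auto
  also have "\<dots> \<le> sqrt (\<Sum>i\<in>UNIV. (\<alpha>$i)\<^sup>2 * z$i)"
    using x_le Z zZ
    by (intro mult_left_le) (auto simp: norm_cart_eq_sqrt_sum_squares sum_power2_mult_binary_nonneg)
  finally have "(\<Sum>i\<in>UNIV. \<bar>\<alpha>$i * x$i\<bar>) \<le> sqrt (\<Sum>i\<in>UNIV. (\<alpha>$i)\<^sup>2 * z$i)" .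
  with zZ show "(x, z) \<in> P0 Z \<alpha>" by (simp add: P0_def)
qed

lemma P0_subset_halfspace:
  fixes Z :: "(real^'n) set"
  assumes Z: "Z \<subseteq> {z. \<forall>i. z$i = 0 \<or> z$i = 1}"
    and above: "\<forall>p \<in> supported_unit_ball Z. c < inner (a, b) p"
  shows "P0 Z a \<subseteq> {p. c < inner (a, b) p}"
proof clarify
  fix x z assume "(x, z) \<in> P0 Z a"
  then have zZ: "z \<in> Z"
    and x_le: "(\<Sum>i\<in>UNIV. \<bar>a$i * x$i\<bar>) \<le> sqrt (\<Sum>i\<in>UNIV. (a$i)\<^sup>2 * z$i)"
    by (auto simp: P0_def)
  have z01: "\<forall>i. z$i = 0 \<or> z$i = 1" using Z zZ by auto
  obtain y where "\<forall>i. y$i * (1 - z$i) = 0" "(\<Sum>i\<in>UNIV. (y$i)\<^sup>2) \<le> 1"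
    and a_y: "inner a y = - sqrt (\<Sum>i\<in>UNIV. (a$i)\<^sup>2 * z$i)"
    using supported_unit_vector_minimizing_inner[OF z01] .
  with zZ have "(y, z) \<in> supported_unit_ball Z" by (simp add: supported_unit_ball_def)
  with above have "c < inner a y + inner b z" by auto
  moreover have "- (\<Sum>i\<in>UNIV. \<bar>a$i * x$i\<bar>) \<le> inner a x"
    unfolding inner_vec_def by (simp add: sum_negf[symmetric] sum_mono)
  ultimately show "c < inner (a, b) (x, z)" using x_le a_y by simp
qed

theorem theorem1:
  fixes Z :: "(real^'n) set"
  assumes "Z \<subseteq> {z. \<forall>i. z$i = 0 \<or> z$i = 1}"
  shows "convex hull {(x, z). z \<in> Z \<and> (\<Sum>i\<in>UNIV. (x$i)\<^sup>2) \<le> 1 \<and>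
                (\<forall>i. x$i * (1 - z$i) = 0)}
         = (\<Inter>\<alpha>\<in>UNIV. P Z \<alpha>)"
  unfolding supported_unit_ball_def[symmetric]
proof
  show "convex hull supported_unit_ball Z \<subseteq> (\<Inter>\<alpha>\<in>UNIV. P Z \<alpha>)"
    unfolding P_def by (intro INT_greatest hull_mono supported_unit_ball_subset_P0[OF assms])
  show "(\<Inter>\<alpha>\<in>UNIV. P Z \<alpha>) \<subseteq> convex hull supported_unit_ball Z"
  proof (rule subsetI, rule ccontr)
    fix q assume q: "q \<in> (\<Inter>\<alpha>\<in>UNIV. P Z \<alpha>)" and "q \<notin> convex hull supported_unit_ball Z"
    moreover have "closed (convex hull supported_unit_ball Z)"
      by (simp add: assms compact_convex_hull compact_imp_closed compact_supported_unit_ball)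
    ultimately obtain w c where "inner w q < c"
      and "\<forall>p \<in> convex hull supported_unit_ball Z. c < inner w p"
      using separating_hyperplane_closed_point[OF convex_convex_hull] by blast
    moreover obtain a b where "w = (a, b)" by fastforce
    ultimately have "inner (a, b) q < c" "\<forall>p \<in> supported_unit_ball Z. c < inner (a, b) p"
      by (auto intro: hull_inc)
    have "P Z a \<subseteq> {p. c < inner (a, b) p}"
      unfolding P_def
      by (intro hull_minimal P0_subset_halfspace[OF assms] convex_halfspace_gt) fact
    with q \<open>inner (a, b) q < c\<close> show False by auto
  qed
qed

end
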